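(* Let $F$ be a graph of diameter $2$, $n=|V(F)|$, $t=\delta(F)$, and let $l>n$ be an integer. Then: (1) $\delta_i=f_{2l}$ for all $i\in\{1,\dots,t\}$; (2) $\delta_i=\delta_l$ for all $i\in\{t+1,\dots,l\}$; (3) $\delta_i=0$ for all $i\in\{l+t,l+t+1,\dots,2l-1\}$.
   Context: All graphs are simple, finite, undirected. The $F$-degree of a vertex $v$ in $G$ is the number of subgraphs of $G$ (not necessarily induced) isomorphic to $F$ and containing $v$. $A_{2l-1}$ is the graph with vertex set $\{1,\dots,2l-1\}$ in which distinct $i,j$ are adjacent iff $|i-j|\le l-1$; $F_{2l}$ is obtained from $A_{2l-1}$ by adding a new vertex $2l$ joined exactly to $1,\dots,t$. $z_i$ is the $F$-degree of $i$ in $A_{2l-1}$, $f_i$ is the $F$-degree of $i$ in $F_{2l}$, and $\delta_i=f_i-z_i$ for $i\in\{1,\dots,2l-1\}$. *)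

theory Defs
  imports Main
begin

definition simple_graph :: "'a set \<Rightarrow> 'a set set \<Rightarrow> bool" where
  "simple_graph V E \<longleftrightarrow> finite V \<and> (\<forall>e\<in>E. \<exists>u v. e = {u, v} \<and> u \<noteq> v \<and> u \<in> V \<and> v \<in> V)"

definition adj :: "'a set set \<Rightarrow> 'a \<Rightarrow> 'a \<Rightarrow> bool" where
  "adj E u v \<longleftrightarrow> {u, v} \<in> E"

definition degree :: "'a set \<Rightarrow> 'a set set \<Rightarrow> 'a \<Rightarrow> nat" where
  "degree V E v = card {u \<in> V. {u, v} \<in> E}"

definition min_degree :: "'a set \<Rightarrow> 'a set set \<Rightarrow> nat" where
  "min_degree V E = Min (degree V E ` V)"

definition is_walk :: "'a set \<Rightarrow> 'a set set \<Rightarrow> 'a list \<Rightarrow> bool" where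
  "is_walk V E p \<longleftrightarrow> p \<noteq> [] \<and> set p \<subseteq> V \<and> (\<forall>i. Suc i < length p \<longrightarrow> {p ! i, p ! Suc i} \<in> E)"

definition connected_by :: "'a set \<Rightarrow> 'a set set \<Rightarrow> 'a \<Rightarrow> 'a \<Rightarrow> nat \<Rightarrow> bool" where
  "connected_by V E u v k \<longleftrightarrow> (\<exists>p. is_walk V E p \<and> hd p = u \<and> last p = v \<and> length p = Suc k)"

definition graph_dist :: "'a set \<Rightarrow> 'a set set \<Rightarrow> 'a \<Rightarrow> 'a \<Rightarrow> nat" where
  "graph_dist V E u v = (LEAST k. connected_by V E u v k)"

definition connected_graph :: "'a set \<Rightarrow> 'a set set \<Rightarrow> bool" where
  "connected_graph V E \<longleftrightarrow> V \<noteq> {} \<and> (\<forall>u\<in>V. \<forall>v\<in>V. \<exists>k. connected_by V E u v k)"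

definition diameter :: "'a set \<Rightarrow> 'a set set \<Rightarrow> nat" where
  "diameter V E = Max {graph_dist V E u v | u v. u \<in> V \<and> v \<in> V}"

definition has_diameter :: "'a set \<Rightarrow> 'a set set \<Rightarrow> nat \<Rightarrow> bool" where
  "has_diameter V E d \<longleftrightarrow> connected_graph V E \<and> diameter V E = d"

definition graph_iso :: "'a set \<Rightarrow> 'a set set \<Rightarrow> 'b set \<Rightarrow> 'b set set \<Rightarrow> bool" where
  "graph_iso V1 E1 V2 E2 \<longleftrightarrow> (\<exists>f. bij_betw f V1 V2 \<and>
     (\<forall>u\<in>V1. \<forall>v\<in>V1. {u, v} \<in> E1 \<longleftrightarrow> {f u, f v} \<in> E2))"

definition is_subgraph :: "'b set \<Rightarrow> 'b set set \<Rightarrow> 'b set \<Rightarrow> 'b set set \<Rightarrow> bool" where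
  "is_subgraph W D V E \<longleftrightarrow> W \<subseteq> V \<and> D \<subseteq> E \<and> (\<forall>e\<in>D. e \<subseteq> W)"

definition F_degree :: "'a set \<Rightarrow> 'a set set \<Rightarrow> 'b set \<Rightarrow> 'b set set \<Rightarrow> 'b \<Rightarrow> nat" where
  "F_degree VF EF V E v = card {(W, D). is_subgraph W D V E \<and> v \<in> W \<and> graph_iso VF EF W D}"

definition A_V :: "nat \<Rightarrow> nat set" where
  "A_V l = {1 .. 2*l - 1}"

definition A_E :: "nat \<Rightarrow> nat set set" where
  "A_E l = {{i, j} | i j. i \<in> A_V l \<and> j \<in> A_V l \<and> i \<noteq> j \<and> (if i \<le> j then j - i else i - j) \<le> l - 1}"

definition FF_V :: "nat \<Rightarrow> nat set" where
  "FF_V l = {1 .. 2*l}"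

definition FF_E :: "nat \<Rightarrow> nat \<Rightarrow> nat set set" where
  "FF_E l t = A_E l \<union> {{2*l, i} | i. 1 \<le> i \<and> i \<le> t}"

end

(* Deleting the apex 2l from F_{2l} leaves A_{2l-1}, so \<delta>_i counts the copies of F in
   F_{2l} that contain both i and 2l.  In such a copy the apex has degree at least t,
   while its neighbourhood in F_{2l} is {1..t}: the copy contains all of 1..t, giving (1).
   As F has diameter 2, every vertex of the copy is within distance 2 of the apex, so the
   copy lies in S = {1..t+l-1} \<union> {2l}, giving (3).  Any two vertices i, j of {t+1..l} are
   adjacent to every vertex of S except 2l, so the transposition (i j) preserves the edges
   inside S and maps the copies through i and 2l injectively to those through j and 2l,
   giving (2). *)

theory Submission
  imports Defs "HOL-Combinatorics.Transposition"
begin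

definition copies :: "'a set \<Rightarrow> 'a set set \<Rightarrow> 'b set \<Rightarrow> 'b set set \<Rightarrow> ('b set \<times> 'b set set) set" where
  "copies VF EF V E = {(W, D). is_subgraph W D V E \<and> graph_iso VF EF W D}"

lemma F_degree_eq_card_copies:
  "F_degree VF EF V E v = card {c \<in> copies VF EF V E. v \<in> fst c}"
  unfolding F_degree_def copies_def by (rule arg_cong[where f = card]) auto

lemma finite_copies: "finite V \<Longrightarrow> finite (copies VF EF V E)"
  by (rule finite_subset[of _ "Pow V \<times> Pow (Pow V)"]) (auto simp: copies_def is_subgraph_def)

lemma is_subgraph_delete_vertex:
  "is_subgraph W D (V - {a}) {e \<in> E. a \<notin> e} \<longleftrightarrow> is_subgraph W D V E \<and> a \<notin> W"
  unfolding is_subgraph_def by blast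

lemma F_degree_delete_vertex:
  assumes "finite V"
  shows "F_degree VF EF V E v =
    F_degree VF EF (V - {a}) {e \<in> E. a \<notin> e} v + card {c \<in> copies VF EF V E. v \<in> fst c \<and> a \<in> fst c}"
proof -
  let ?avoiding = "{c \<in> copies VF EF (V - {a}) {e \<in> E. a \<notin> e}. v \<in> fst c}"
  let ?through = "{c \<in> copies VF EF V E. v \<in> fst c \<and> a \<in> fst c}"
  have delete: "copies VF EF (V - {a}) {e \<in> E. a \<notin> e} = {c \<in> copies VF EF V E. a \<notin> fst c}"
    unfolding copies_def by (auto simp: is_subgraph_delete_vertex)
  then have "{c \<in> copies VF EF V E. v \<in> fst c} = ?avoiding \<union> ?through"
    by auto
  moreover have "card (?avoiding \<union> ?through) = card ?avoiding + card ?through"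
    by (rule card_Un_disjoint) (use assms delete in \<open>auto simp: finite_copies\<close>)
  ultimately show ?thesis
    unfolding F_degree_eq_card_copies by simp
qed

lemma graph_iso_min_degree_le:
  assumes "graph_iso VF EF W D" "finite VF" "w \<in> W"
  shows "min_degree VF EF \<le> card {u \<in> W. {u, w} \<in> D}"
proof -
  obtain f where f: "bij_betw f VF W" "\<forall>u\<in>VF. \<forall>v\<in>VF. {u, v} \<in> EF \<longleftrightarrow> {f u, f v} \<in> D"
    using assms(1) unfolding graph_iso_def by blast
  obtain x where x: "x \<in> VF" "w = f x"
    using f(1) assms(3) by (auto simp: bij_betw_def)
  have "f ` {u \<in> VF. {u, x} \<in> EF} = {u \<in> W. {u, w} \<in> D}"
    using f x by (auto simp: bij_betw_def)
  moreover have "card (f ` {u \<in> VF. {u, x} \<in> EF}) = degree VF EF x"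
    unfolding degree_def
    by (rule card_image) (rule inj_on_subset[OF bij_betw_imp_inj_on[OF f(1)]], auto)
  moreover have "min_degree VF EF \<le> degree VF EF x"
    unfolding min_degree_def using assms(2) x(1) by simp
  ultimately show ?thesis by simp
qed

lemma min_degree_le_card:
  assumes "finite V" "V \<noteq> {}"
  shows "min_degree V E \<le> card V"
proof -
  obtain x where "x \<in> V" using assms(2) by blast
  then have "min_degree V E \<le> degree V E x"
    unfolding min_degree_def using assms(1) by simp
  also have "\<dots> \<le> card V"
    unfolding degree_def using assms(1) by (intro card_mono) auto
  finally show ?thesis .
qed

lemma connected_by_graph_dist:
  assumes "connected_graph V E" "u \<in> V" "v \<in> V"
  shows "connected_by V E u v (graph_dist V E u v)"
  using assms unfolding connected_graph_def graph_dist_def by (blast intro: LeastI_ex)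

lemma graph_dist_le_diameter:
  assumes "finite V" "u \<in> V" "v \<in> V"
  shows "graph_dist V E u v \<le> diameter V E"
proof -
  have "{graph_dist V E u v | u v. u \<in> V \<and> v \<in> V} = (\<lambda>(u, v). graph_dist V E u v) ` (V \<times> V)"
    by auto
  then show ?thesis
    unfolding diameter_def using assms by (auto intro: Max_ge)
qed

lemma connected_by_at_most_2:
  assumes "connected_by V E u v k" "k \<le> 2"
  shows "u = v \<or> {u, v} \<in> E \<or> (\<exists>c\<in>V. {u, c} \<in> E \<and> {c, v} \<in> E)"
proof -
  obtain p where p: "is_walk V E p" "hd p = u" "last p = v" "length p = Suc k"
    using assms(1) unfolding connected_by_def by blast
  have step: "{p ! i, p ! Suc i} \<in> E" if "Suc i < length p" for i
    using p(1) that unfolding is_walk_def by blast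
  consider "k = 0" | "k = 1" | "k = 2" using assms(2) by linarith
  then show ?thesis
  proof cases
    case 1
    then show ?thesis using p by (auto simp: length_Suc_conv)
  next
    case 2
    then obtain a b where "p = [a, b]" using p(4) by (auto simp: length_Suc_conv)
    then show ?thesis using p step[of 0] by simp
  next
    case 3
    then obtain a b c where abc: "p = [a, b, c]" using p(4) by (auto simp: length_Suc_conv numeral_2_eq_2)
    then have "b \<in> V" using p(1) unfolding is_walk_def by simp
    then show ?thesis using abc p step[of 0] step[of 1] by auto
  qed
qed

lemma diameter_2_cases:
  assumes "simple_graph V E" "has_diameter V E 2" "u \<in> V" "v \<in> V"
  shows "u = v \<or> {u, v} \<in> E \<or> (\<exists>c\<in>V. {u, c} \<in> E \<and> {c, v} \<in> E)"
proof (rule connected_by_at_most_2)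
  show "connected_by V E u v (graph_dist V E u v)"
    using assms by (auto simp: has_diameter_def intro: connected_by_graph_dist)
  show "graph_dist V E u v \<le> 2"
    using assms graph_dist_le_diameter[of V u v E] by (simp add: simple_graph_def has_diameter_def)
qed

lemma graph_iso_diameter_2_cases:
  assumes "simple_graph VF EF" "has_diameter VF EF 2" "graph_iso VF EF W D" "x \<in> W" "y \<in> W"
  shows "x = y \<or> {x, y} \<in> D \<or> (\<exists>c\<in>W. {x, c} \<in> D \<and> {c, y} \<in> D)"
proof -
  obtain f where f: "bij_betw f VF W" "\<forall>u\<in>VF. \<forall>v\<in>VF. {u, v} \<in> EF \<longleftrightarrow> {f u, f v} \<in> D"
    using assms(3) unfolding graph_iso_def by blast
  obtain u v where uv: "u \<in> VF" "x = f u" "v \<in> VF" "y = f v"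
    using f(1) assms(4,5) by (auto simp: bij_betw_def)
  have "u = v \<or> {u, v} \<in> EF \<or> (\<exists>c\<in>VF. {u, c} \<in> EF \<and> {c, v} \<in> EF)"
    using diameter_2_cases[OF assms(1,2) uv(1,3)] .
  then show ?thesis
    using f uv by (auto simp: bij_betw_def)
qed

lemma graph_iso_image:
  assumes "graph_iso VF EF W D" "inj \<pi>"
  shows "graph_iso VF EF (\<pi> ` W) (image \<pi> ` D)"
proof -
  obtain f where f: "bij_betw f VF W" "\<forall>u\<in>VF. \<forall>v\<in>VF. {u, v} \<in> EF \<longleftrightarrow> {f u, f v} \<in> D"
    using assms(1) unfolding graph_iso_def by blast
  have bij: "bij_betw (\<pi> \<circ> f) VF (\<pi> ` W)"
    using f(1) assms(2) by (auto intro: bij_betw_trans inj_on_imp_bij_betw inj_on_subset)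
  have "inj (image \<pi>)"
    using assms(2) by (simp add: inj_def inj_image_eq_iff)
  then have "{(\<pi> \<circ> f) u, (\<pi> \<circ> f) v} \<in> image \<pi> ` D \<longleftrightarrow> {f u, f v} \<in> D" for u v
    using inj_image_mem_iff[of "image \<pi>" "{f u, f v}" D] by simp
  then have edges: "\<forall>u\<in>VF. \<forall>v\<in>VF. {u, v} \<in> EF \<longleftrightarrow> {(\<pi> \<circ> f) u, (\<pi> \<circ> f) v} \<in> image \<pi> ` D"
    using f(2) by simp
  show ?thesis
    unfolding graph_iso_def by (intro exI[of _ "\<pi> \<circ> f"] conjI bij edges)
qed

lemma is_subgraph_image:
  assumes "is_subgraph W D V E" "W \<subseteq> S" "\<pi> ` S \<subseteq> V" "\<And>e. e \<in> E \<Longrightarrow> e \<subseteq> S \<Longrightarrow> \<pi> ` e \<in> E"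
  shows "is_subgraph (\<pi> ` W) (image \<pi> ` D) V E"
proof -
  have D: "D \<subseteq> E" "\<And>e. e \<in> D \<Longrightarrow> e \<subseteq> W"
    using assms(1) unfolding is_subgraph_def by auto
  have "\<pi> ` e \<in> E" if "e \<in> D" for e
    using that D assms(2) by (intro assms(4)) auto
  moreover have "\<pi> ` W \<subseteq> V"
    using assms(2,3) by blast
  ultimately show ?thesis
    unfolding is_subgraph_def using D(2) by blast
qed

lemma transpose_twins_edge:
  assumes "simple_graph V E" "e \<in> E" "e \<subseteq> S"
    and twins: "\<And>y. y \<in> S \<Longrightarrow> y \<noteq> i \<Longrightarrow> y \<noteq> j \<Longrightarrow> {i, y} \<in> E \<longleftrightarrow> {j, y} \<in> E"
  shows "transpose i j ` e \<in> E"
proof -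
  obtain x y where e: "e = {x, y}" "x \<noteq> y"
    using assms(1,2) unfolding simple_graph_def by blast
  have one_end: "{transpose i j a, b} \<in> E"
    if "{a, b} \<in> E" "a \<in> {i, j}" "b \<in> S" "b \<notin> {i, j}" for a b
    using that twins[of b] by auto
  consider "x \<notin> {i, j}" "y \<notin> {i, j}" | "x \<in> {i, j}" "y \<in> {i, j}"
    | "x \<in> {i, j}" "y \<notin> {i, j}" | "x \<notin> {i, j}" "y \<in> {i, j}"
    by blast
  then show ?thesis
  proof cases
    case 1
    then show ?thesis using assms(2) e by simp
  next
    case 2
    then have "transpose i j ` e = e" using e by (auto simp: transpose_def)
    then show ?thesis using assms(2) by simp
  next
    case 3
    then show ?thesis using one_end[of x y] assms(2,3) e by simp
  next
    case 4
    then show ?thesis using one_end[of y x] assms(2,3) e by (simp add: insert_commute)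
  qed
qed

lemma A_V_eq_delete_apex: "A_V l = FF_V l - {2*l}"
  unfolding A_V_def FF_V_def by auto

lemma A_E_eq_delete_apex: "A_E l = {e \<in> FF_E l t. 2*l \<notin> e}"
  unfolding A_E_def FF_E_def A_V_def by auto

lemma mem_A_E_iff:
  "{x, y} \<in> A_E l \<longleftrightarrow> x \<noteq> y \<and> x \<in> A_V l \<and> y \<in> A_V l \<and> x \<le> y + (l - 1) \<and> y \<le> x + (l - 1)"
proof
  show "{x, y} \<in> A_E l" if "x \<noteq> y \<and> x \<in> A_V l \<and> y \<in> A_V l \<and> x \<le> y + (l - 1) \<and> y \<le> x + (l - 1)"
    unfolding A_E_def using that by (intro CollectI exI[of _ x] exI[of _ y]) auto
qed (auto simp: A_E_def doubleton_eq_iff split: if_splits)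

lemma mem_FF_E_off_apex:
  "x \<noteq> 2*l \<Longrightarrow> y \<noteq> 2*l \<Longrightarrow> {x, y} \<in> FF_E l t \<longleftrightarrow> {x, y} \<in> A_E l"
  unfolding FF_E_def by (auto simp: doubleton_eq_iff)

lemma mem_FF_E_apex:
  assumes "t < 2*l"
  shows "{2*l, y} \<in> FF_E l t \<longleftrightarrow> y \<in> {1..t}"
  using assms unfolding FF_E_def A_E_def A_V_def by (auto simp: doubleton_eq_iff)

lemma simple_graph_FF:
  assumes "t < 2*l"
  shows "simple_graph (FF_V l) (FF_E l t)"
  using assms unfolding simple_graph_def FF_V_def FF_E_def A_E_def A_V_def by fastforce

definition copies_through_apex :: "'a set \<Rightarrow> 'a set set \<Rightarrow> nat \<Rightarrow> nat \<Rightarrow> nat \<Rightarrow> (nat set \<times> nat set set) set" where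
  "copies_through_apex VF EF l t i = {c \<in> copies VF EF (FF_V l) (FF_E l t). i \<in> fst c \<and> 2*l \<in> fst c}"

lemma F_degree_FF_minus_A:
  "int (F_degree VF EF (FF_V l) (FF_E l t) i) - int (F_degree VF EF (A_V l) (A_E l) i)
    = int (card (copies_through_apex VF EF l t i))"
  using F_degree_delete_vertex[of "FF_V l" VF EF "FF_E l t" i "2*l"]
  unfolding copies_through_apex_def A_V_eq_delete_apex A_E_eq_delete_apex[of l t]
  by (simp add: FF_V_def)

lemma apex_copy_contains_neighbours:
  assumes "(W, D) \<in> copies VF EF (FF_V l) (FF_E l t)" "2*l \<in> W"
    and "finite VF" "t \<le> min_degree VF EF" "t < 2*l"
  shows "{1..t} \<subseteq> W"
proof -
  let ?N = "{u \<in> W. {u, 2*l} \<in> D}"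
  have "?N \<subseteq> {1..t}"
  proof
    fix u assume "u \<in> ?N"
    then have "{2*l, u} \<in> FF_E l t"
      using assms(1) by (auto simp: copies_def is_subgraph_def insert_commute)
    then show "u \<in> {1..t}" using mem_FF_E_apex[OF assms(5)] by blast
  qed
  moreover have "t \<le> card ?N"
    using assms graph_iso_min_degree_le[of VF EF W D "2*l"] by (auto simp: copies_def)
  ultimately have "?N = {1..t}"
    using card_mono[of "{1..t}" ?N] by (intro card_subset_eq) auto
  then show ?thesis by blast
qed

lemma apex_copy_subset:
  assumes "(W, D) \<in> copies VF EF (FF_V l) (FF_E l t)" "2*l \<in> W"
    and "simple_graph VF EF" "has_diameter VF EF 2" "t < 2*l"
  shows "W \<subseteq> {1..t+l-1} \<union> {2*l}"
proof
  fix b assume "b \<in> W"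
  have edges: "D \<subseteq> FF_E l t" and iso: "graph_iso VF EF W D"
    using assms(1) by (auto simp: copies_def is_subgraph_def)
  have apex_nbr: "{2*l, u} \<in> D \<Longrightarrow> u \<in> {1..t}" for u
    using edges mem_FF_E_apex[OF assms(5)] by blast
  consider "b = 2*l" | "{2*l, b} \<in> D" | c where "{2*l, c} \<in> D" "{c, b} \<in> D"
    using graph_iso_diameter_2_cases[OF assms(3,4) iso assms(2) \<open>b \<in> W\<close>] by blast
  then show "b \<in> {1..t+l-1} \<union> {2*l}"
  proof cases
    case 2
    then show ?thesis using apex_nbr assms(5) by fastforce
  next
    case (3 c)
    then have c: "c \<in> {1..t}" using apex_nbr by blast
    show ?thesis
    proof (cases "b = 2*l")
      case False
      have "{c, b} \<in> A_E l"
        using 3 c edges False assms(5) mem_FF_E_off_apex[of c l b t] by auto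
      then show ?thesis using c by (auto simp: mem_A_E_iff A_V_def)
    qed simp
  qed simp
qed

lemma mem_FF_E_middle_iff:
  assumes "k \<in> {t+1..l}" "y \<in> {1..t+l} \<union> {2*l}" "y \<noteq> k"
  shows "{k, y} \<in> FF_E l t \<longleftrightarrow> y \<noteq> 2*l"
proof (cases "y = 2*l")
  case True
  then show ?thesis
    using assms(1) mem_FF_E_apex[of t l k] by (auto simp: insert_commute)
next
  case False
  then show ?thesis
    using assms by (auto simp: mem_FF_E_off_apex mem_A_E_iff A_V_def)
qed

lemma apex_copy_transpose:
  assumes "(W, D) \<in> copies VF EF (FF_V l) (FF_E l t)" "W \<subseteq> {1..t+l} \<union> {2*l}"
    and "i \<in> {t+1..l}" "j \<in> {t+1..l}"
  shows "(transpose i j ` W, image (transpose i j) ` D) \<in> copies VF EF (FF_V l) (FF_E l t)"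
proof -
  \<comment> \<open>The region reaches up to t+l, not t+l-1, so that it contains i and j also when t = 0.\<close>
  let ?S = "{1..t+l} \<union> {2*l}"
  have "transpose i j ` ?S = ?S"
    using assms(3,4) by (intro transpose_image_eq) auto
  moreover have "?S \<subseteq> FF_V l"
    using assms(3) by (auto simp: FF_V_def)
  moreover have "transpose i j ` e \<in> FF_E l t" if "e \<in> FF_E l t" "e \<subseteq> ?S" for e
    using simple_graph_FF[of t l] that assms(3,4) mem_FF_E_middle_iff[of i t l] mem_FF_E_middle_iff[of j t l]
    by (intro transpose_twins_edge[where S = ?S]) auto
  ultimately have "is_subgraph (transpose i j ` W) (image (transpose i j) ` D) (FF_V l) (FF_E l t)"
    using assms(1,2) by (intro is_subgraph_image[where S = ?S]) (auto simp: copies_def)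
  moreover have "graph_iso VF EF (transpose i j ` W) (image (transpose i j) ` D)"
    using assms(1) by (intro graph_iso_image) (auto simp: copies_def inj_transpose)
  ultimately show ?thesis
    by (simp add: copies_def)
qed

lemma card_copies_through_apex_le:
  assumes "simple_graph VF EF" "has_diameter VF EF 2" "i \<in> {t+1..l}" "j \<in> {t+1..l}"
  shows "card (copies_through_apex VF EF l t i) \<le> card (copies_through_apex VF EF l t j)"
proof -
  let ?\<tau> = "transpose i j"
  let ?g = "map_prod (image ?\<tau>) (image (image ?\<tau>))"
  have "inj (image ?\<tau>)"
    by (rule injI) (simp add: inj_image_eq_iff[OF inj_transpose])
  then have "inj (image (image ?\<tau>))"
    by (intro injI) (simp add: inj_image_eq_iff)
  then have "inj ?g"
    using map_prod_inj_on[of "image ?\<tau>" UNIV "image (image ?\<tau>)" UNIV] \<open>inj (image ?\<tau>)\<close> by simp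
  moreover have "?g c \<in> copies_through_apex VF EF l t j" if "c \<in> copies_through_apex VF EF l t i" for c
  proof -
    obtain W D where c: "c = (W, D)" by fastforce
    then have copy: "(W, D) \<in> copies VF EF (FF_V l) (FF_E l t)" and "i \<in> W" "2*l \<in> W"
      using that by (auto simp: copies_through_apex_def)
    have "W \<subseteq> {1..t+l} \<union> {2*l}"
      using apex_copy_subset[OF copy \<open>2*l \<in> W\<close> assms(1,2)] assms(3) by auto
    then have "(?\<tau> ` W, image ?\<tau> ` D) \<in> copies VF EF (FF_V l) (FF_E l t)"
      using apex_copy_transpose[OF copy _ assms(3,4)] by blast
    moreover have "j \<in> ?\<tau> ` W"
      using \<open>i \<in> W\<close> by (metis transpose_apply_first image_eqI)
    moreover have "2*l \<in> ?\<tau> ` W"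
      using \<open>2*l \<in> W\<close> assms(3,4) by (auto simp: in_transpose_image_iff)
    ultimately show ?thesis
      unfolding c copies_through_apex_def by simp
  qed
  moreover have "finite (copies_through_apex VF EF l t j)"
    by (simp add: copies_through_apex_def finite_copies FF_V_def)
  ultimately show ?thesis
    by (intro card_inj_on_le[of ?g]) (auto intro: inj_on_subset)
qed

lemma card_copies_through_apex_eq:
  assumes "simple_graph VF EF" "has_diameter VF EF 2" "i \<in> {t+1..l}" "j \<in> {t+1..l}"
  shows "card (copies_through_apex VF EF l t i) = card (copies_through_apex VF EF l t j)"
  using card_copies_through_apex_le[OF assms] card_copies_through_apex_le[OF assms(1,2,4,3)]
  by (rule antisym)

lemma copies_through_apex_low:
  assumes "i \<in> {1..t}" "finite VF" "t \<le> min_degree VF EF" "t < 2*l"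
  shows "copies_through_apex VF EF l t i = {c \<in> copies VF EF (FF_V l) (FF_E l t). 2*l \<in> fst c}"
  using assms apex_copy_contains_neighbours[of _ _ VF EF l t]
  unfolding copies_through_apex_def by fastforce

lemma copies_through_apex_high:
  assumes "i \<in> {l+t..2*l-1}" "simple_graph VF EF" "has_diameter VF EF 2" "t < 2*l"
  shows "copies_through_apex VF EF l t i = {}"
  using assms apex_copy_subset[of _ _ VF EF l t]
  unfolding copies_through_apex_def by fastforce

theorem lemma5:
  fixes VF :: "'a set" and EF :: "'a set set" and l :: nat
  assumes "simple_graph VF EF"
    and "has_diameter VF EF 2"
    and "l > card VF"
  defines "t \<equiv> min_degree VF EF"
  defines "z \<equiv> \<lambda>i. int (F_degree VF EF (A_V l) (A_E l) i)"
  defines "f \<equiv> \<lambda>i. int (F_degree VF EF (FF_V l) (FF_E l t) i)"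
  defines "\<delta> \<equiv> \<lambda>i. f i - z i"
  shows "(\<forall>i\<in>{1..t}. \<delta> i = f (2*l))
       \<and> (\<forall>i\<in>{t+1..l}. \<delta> i = \<delta> l)
       \<and> (\<forall>i\<in>{l+t..2*l-1}. \<delta> i = 0)"
proof -
  have "finite VF" "VF \<noteq> {}"
    using assms(1,2) by (auto simp: simple_graph_def has_diameter_def connected_graph_def)
  then have "t < l"
    using min_degree_le_card[of VF EF] assms(3) unfolding t_def by linarith
  have \<delta>_eq: "\<delta> i = int (card (copies_through_apex VF EF l t i))" for i
    unfolding \<delta>_def f_def z_def by (rule F_degree_FF_minus_A)
  have "\<forall>i\<in>{1..t}. \<delta> i = f (2*l)"
    using copies_through_apex_low[where t = t and l = l, OF _ \<open>finite VF\<close>] \<open>t < l\<close>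
    unfolding \<delta>_eq f_def F_degree_eq_card_copies t_def by simp
  moreover have "\<delta> i = \<delta> l" if "i \<in> {t+1..l}" for i
    using card_copies_through_apex_eq[OF assms(1,2) that, of l] \<open>t < l\<close>
    unfolding \<delta>_eq by simp
  moreover have "\<forall>i\<in>{l+t..2*l-1}. \<delta> i = 0"
    using copies_through_apex_high[OF _ assms(1,2)] \<open>t < l\<close>
    unfolding \<delta>_eq by simp
  ultimately show ?thesis
    by blast
qed

end
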